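(* The linear span of $\{(I-S)h_k:k\geq2\}$ is dense in $H^2$.
   Context: $H^2$ is the Hardy space on the open unit disk $\mathbb{D}$ and $S$ the shift operator $Sf(z)=zf(z)$. For $k\geq 2$, $h_k(z)=\frac{1}{1-z}\big(\mathrm{Log}(1-z^k)-\mathrm{Log}(1-z)-\ln k\big)$ with $\mathrm{Log}$ the principal branch, so $(I-S)h_k(z)=\mathrm{Log}(1-z^k)-\mathrm{Log}(1-z)-\ln k$. *)

theory Defs
  imports "HOL-Analysis.Analysis"
begin

definition taylor_coeff :: "(complex \<Rightarrow> complex) \<Rightarrow> nat \<Rightarrow> complex" where
  "taylor_coeff f n = (deriv ^^ n) f 0 / of_nat (fact n)"

definition hardy2 :: "(complex \<Rightarrow> complex) set" where
  "hardy2 = {f. f holomorphic_on ball 0 1 \<and>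
                summable (\<lambda>n. (cmod (taylor_coeff f n))^2)}"

definition hardy2_norm :: "(complex \<Rightarrow> complex) \<Rightarrow> real" where
  "hardy2_norm f = sqrt (\<Sum>n. (cmod (taylor_coeff f n))^2)"

definition shift :: "(complex \<Rightarrow> complex) \<Rightarrow> complex \<Rightarrow> complex" where
  "shift f = (\<lambda>z. z * f z)"

definition h :: "nat \<Rightarrow> complex \<Rightarrow> complex" where
  "h k = (\<lambda>z. (Ln (1 - z ^ k) - Ln (1 - z) - of_real (ln (real k))) / (1 - z))"

definition lin_span :: "(complex \<Rightarrow> complex) set \<Rightarrow> (complex \<Rightarrow> complex) set" where
  "lin_span F = {g. \<exists>A c. finite A \<and> A \<subseteq> F \<and> g = (\<lambda>z. \<Sum>u\<in>A. c u * u z)}"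

end

theory Submission
  imports Defs "HOL-Complex_Analysis.Complex_Analysis"
begin

text \<open>Passing to Taylor coefficients turns \<open>H\<^sup>2\<close> into \<open>l\<^sup>2\<close> and \<open>(I - S) h\<^sub>k\<close> into the
  sequence \<open>1/n - [k | n] k/n - [n = 0] ln k\<close>, so it suffices to put every unit vector
  \<open>e\<^sub>m\<close> into the closed span of these sequences. Dividing by \<open>ln k\<close> and letting \<open>k \<rightarrow> \<infinity>\<close>
  gives \<open>e\<^sub>0\<close>, hence also each \<open>1/n - [k | n] k/n\<close>. Sieving with these as in the sieve of
  Eratosthenes, one prime \<open>p \<le> P\<close> at a time, puts \<open>s(P,m) - (\<Prod>p \<le> P. 1 - 1/p) (1/n)\<close> into the
  closed span, where \<open>s(P,m)\<close> is \<open>1/j\<close> at the indices \<open>m j\<close> with \<open>j\<close> free of prime factors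
  \<open>\<le> P\<close>. As \<open>P \<rightarrow> \<infinity>\<close>, \<open>s(P,m) \<rightarrow> e\<^sub>m\<close> and the product decreases to some \<open>L\<close>, so
  \<open>e\<^sub>m - L (1/n)\<close> lies in the closed span; if \<open>L \<noteq> 0\<close>, averaging over \<open>m\<close> shows that
  \<open>1/n\<close> itself does.\<close>

section \<open>Square-summable sequences\<close>

definition square_summable :: "(nat \<Rightarrow> complex) \<Rightarrow> bool" where
  "square_summable a \<longleftrightarrow> summable (\<lambda>n. (cmod (a n))^2)"

definition l2_norm :: "(nat \<Rightarrow> complex) \<Rightarrow> real" where
  "l2_norm a = sqrt (\<Sum>n. (cmod (a n))^2)"

lemma l2_norm_nonneg: "square_summable a \<Longrightarrow> l2_norm a \<ge> 0"
  unfolding square_summable_def l2_norm_def by (simp add: suminf_nonneg)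

lemma L2_set_le_l2_norm:
  assumes "square_summable a"
  shows "L2_set (\<lambda>n. cmod (a n)) {..<N} \<le> l2_norm a"
proof -
  have "(\<Sum>n<N. (cmod (a n))^2) \<le> (\<Sum>n. (cmod (a n))^2)"
    using assms unfolding square_summable_def by (intro sum_le_suminf) auto
  thus ?thesis unfolding L2_set_def l2_norm_def by simp
qed

lemma l2_norm_triangle:
  assumes "square_summable a" "square_summable b"
  shows "square_summable (\<lambda>n. a n + b n)"
    and "l2_norm (\<lambda>n. a n + b n) \<le> l2_norm a + l2_norm b"
proof -
  have partial_le: "(\<Sum>n<N. (cmod (a n + b n))^2) \<le> (l2_norm a + l2_norm b)^2" for N
  proof -
    have "L2_set (\<lambda>n. cmod (a n + b n)) {..<N} \<le> L2_set (\<lambda>n. cmod (a n) + cmod (b n)) {..<N}"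
      by (intro L2_set_mono) (auto simp: norm_triangle_ineq)
    also have "\<dots> \<le> L2_set (\<lambda>n. cmod (a n)) {..<N} + L2_set (\<lambda>n. cmod (b n)) {..<N}"
      by (rule L2_set_triangle_ineq)
    also have "\<dots> \<le> l2_norm a + l2_norm b"
      using assms by (intro add_mono L2_set_le_l2_norm)
    finally have "sqrt (\<Sum>n<N. (cmod (a n + b n))^2) \<le> l2_norm a + l2_norm b"
      unfolding L2_set_def .
    moreover have nonneg: "0 \<le> (\<Sum>n<N. (cmod (a n + b n))^2)" by (intro sum_nonneg) auto
    ultimately have "(sqrt (\<Sum>n<N. (cmod (a n + b n))^2))^2 \<le> (l2_norm a + l2_norm b)^2"
      by (intro power_mono) simp_all
    with nonneg show ?thesis by simp
  qed
  show summable: "square_summable (\<lambda>n. a n + b n)"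
    unfolding square_summable_def by (rule summableI_nonneg_bounded[OF _ partial_le]) auto
  have "(\<Sum>n. (cmod (a n + b n))^2) \<le> (l2_norm a + l2_norm b)^2"
    using summable partial_le unfolding square_summable_def by (rule suminf_le_const)
  hence "l2_norm (\<lambda>n. a n + b n) \<le> sqrt ((l2_norm a + l2_norm b)^2)"
    unfolding l2_norm_def by (rule real_sqrt_le_mono)
  also have "\<dots> = l2_norm a + l2_norm b"
    using assms by (simp add: l2_norm_nonneg)
  finally show "l2_norm (\<lambda>n. a n + b n) \<le> l2_norm a + l2_norm b" .
qed

lemma l2_norm_scale:
  assumes "square_summable a"
  shows "square_summable (\<lambda>n. c * a n)"
    and "l2_norm (\<lambda>n. c * a n) = cmod c * l2_norm a"
proof -
  have sq: "(\<lambda>n. (cmod (c * a n))^2) = (\<lambda>n. (cmod c)^2 * (cmod (a n))^2)"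
    by (simp add: norm_mult power_mult_distrib)
  show "square_summable (\<lambda>n. c * a n)"
    using assms unfolding square_summable_def sq by (rule summable_mult)
  have "(\<Sum>n. (cmod (c * a n))^2) = (cmod c)^2 * (\<Sum>n. (cmod (a n))^2)"
    using assms unfolding square_summable_def sq by (rule suminf_mult)
  thus "l2_norm (\<lambda>n. c * a n) = cmod c * l2_norm a"
    unfolding l2_norm_def by (simp add: real_sqrt_mult)
qed

lemma l2_norm_mono:
  assumes "square_summable b" "\<And>n. cmod (a n) \<le> cmod (b n)"
  shows "square_summable a" and "l2_norm a \<le> l2_norm b"
proof -
  have le: "(cmod (a n))^2 \<le> (cmod (b n))^2" for n
    using assms(2)[of n] by (simp add: power_mono)
  show summable: "square_summable a"
    using assms(1) unfolding square_summable_def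
    by (rule summable_comparison_test') (use le in auto)
  have "(\<Sum>n. (cmod (a n))^2) \<le> (\<Sum>n. (cmod (b n))^2)"
    using summable assms(1) le unfolding square_summable_def by (intro suminf_le) auto
  thus "l2_norm a \<le> l2_norm b" unfolding l2_norm_def by simp
qed

lemma l2_norm_diff_le:
  assumes "square_summable a" "square_summable b"
  shows "square_summable (\<lambda>n. a n - b n)"
    and "l2_norm (\<lambda>n. a n - b n) \<le> l2_norm a + l2_norm b"
  using l2_norm_triangle[OF assms(1) l2_norm_scale(1)[OF assms(2), of "-1"]]
    l2_norm_scale(2)[OF assms(2), of "-1"] by simp_all

lemma l2_norm_finite_support:
  assumes "finite N" "\<And>n. n \<notin> N \<Longrightarrow> a n = 0"
  shows "square_summable a" and "l2_norm a = sqrt (\<Sum>n\<in>N. (cmod (a n))^2)"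
  unfolding square_summable_def l2_norm_def using assms
  by (auto intro!: summable_finite suminf_finite)

definition tail_seq :: "(nat \<Rightarrow> complex) \<Rightarrow> nat \<Rightarrow> nat \<Rightarrow> complex" where
  "tail_seq a P n = (if n \<ge> P then a n else 0)"

lemma square_summable_tail_seq: "square_summable a \<Longrightarrow> square_summable (tail_seq a P)"
  by (rule l2_norm_mono(1)) (auto simp: tail_seq_def)

lemma l2_norm_tail_seq_tendsto_0:
  assumes "square_summable a"
  shows "(\<lambda>P. l2_norm (tail_seq a P)) \<longlonglongrightarrow> 0"
proof -
  let ?f = "\<lambda>n. (cmod (a n))^2"
  have "(\<lambda>n. (cmod (tail_seq a P n))^2) = (\<lambda>n. if n \<in> {..<P} then 0 else ?f n)" for P
    by (auto simp: tail_seq_def)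
  moreover have "(\<lambda>n. if n \<in> {..<P} then 0 else ?f n) sums (suminf ?f + (\<Sum>n<P. 0 - ?f n))" for P
    using assms unfolding square_summable_def by (intro sums_If_finite_set' summable_sums) auto
  ultimately have "(\<Sum>n. (cmod (tail_seq a P n))^2) = suminf ?f - (\<Sum>n<P. ?f n)" for P
    by (simp add: sums_iff sum_negf)
  moreover have "(\<lambda>P. sqrt (suminf ?f - (\<Sum>n<P. ?f n))) \<longlonglongrightarrow> sqrt (suminf ?f - suminf ?f)"
    using assms unfolding square_summable_def by (intro tendsto_intros summable_LIMSEQ)
  ultimately show ?thesis unfolding l2_norm_def by simp
qed

section \<open>Closed linear spans of families of sequences\<close>

definition seq_span :: "('i \<Rightarrow> nat \<Rightarrow> complex) \<Rightarrow> 'i set \<Rightarrow> (nat \<Rightarrow> complex) set" where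
  "seq_span F I = {v. \<exists>K c. finite K \<and> K \<subseteq> I \<and> v = (\<lambda>n. \<Sum>i\<in>K. c i * F i n)}"

definition closed_seq_span :: "('i \<Rightarrow> nat \<Rightarrow> complex) \<Rightarrow> 'i set \<Rightarrow> (nat \<Rightarrow> complex) set" where
  "closed_seq_span F I = {a. square_summable a \<and>
     (\<forall>e>0. \<exists>v\<in>seq_span F I. square_summable v \<and> l2_norm (\<lambda>n. a n - v n) < e)}"

lemma seq_span_lincomb:
  assumes "v \<in> seq_span F I" "w \<in> seq_span F I"
  shows "(\<lambda>n. \<alpha> * v n + \<beta> * w n) \<in> seq_span F I"
proof -
  obtain K c where K: "finite K" "K \<subseteq> I" "v = (\<lambda>n. \<Sum>i\<in>K. c i * F i n)"
    using assms(1) unfolding seq_span_def by blast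
  obtain L d where L: "finite L" "L \<subseteq> I" "w = (\<lambda>n. \<Sum>i\<in>L. d i * F i n)"
    using assms(2) unfolding seq_span_def by blast
  have extend_K: "(\<Sum>i\<in>K. c i * F i n) = (\<Sum>i\<in>K \<union> L. (if i \<in> K then c i else 0) * F i n)" for n
    using K(1) L(1) by (intro sum.mono_neutral_cong_left) auto
  have extend_L: "(\<Sum>i\<in>L. d i * F i n) = (\<Sum>i\<in>K \<union> L. (if i \<in> L then d i else 0) * F i n)" for n
    using K(1) L(1) by (intro sum.mono_neutral_cong_left) auto
  define e where "e i = \<alpha> * (if i \<in> K then c i else 0) + \<beta> * (if i \<in> L then d i else 0)" for i
  have "(\<lambda>n. \<alpha> * v n + \<beta> * w n) = (\<lambda>n. \<Sum>i\<in>K \<union> L. e i * F i n)"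
    unfolding K(3) L(3) extend_K extend_L e_def
    by (simp add: sum_distrib_left sum.distrib distrib_right mult.assoc)
  thus ?thesis unfolding seq_span_def using K L by blast
qed

lemma closed_seq_span_imp_square_summable:
  "a \<in> closed_seq_span F I \<Longrightarrow> square_summable a"
  unfolding closed_seq_span_def by simp

lemma closed_seq_span_lincomb:
  assumes "a \<in> closed_seq_span F I" "b \<in> closed_seq_span F I"
  shows "(\<lambda>n. \<alpha> * a n + \<beta> * b n) \<in> closed_seq_span F I"
  unfolding closed_seq_span_def
proof (intro CollectI conjI allI impI)
  have a: "square_summable a" and b: "square_summable b"
    using assms by (auto intro: closed_seq_span_imp_square_summable)
  then show "square_summable (\<lambda>n. \<alpha> * a n + \<beta> * b n)"
    by (intro l2_norm_triangle(1) l2_norm_scale(1))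
  fix e :: real assume e: "e > 0"
  define e' where "e' = e / (2 * (cmod \<alpha> + cmod \<beta> + 1))"
  have "e' > 0" unfolding e'_def using e by (simp add: add_nonneg_pos)
  then obtain v w where v: "v \<in> seq_span F I" "square_summable v" "l2_norm (\<lambda>n. a n - v n) < e'"
    and w: "w \<in> seq_span F I" "square_summable w" "l2_norm (\<lambda>n. b n - w n) < e'"
    using assms unfolding closed_seq_span_def by blast
  have av: "square_summable (\<lambda>n. a n - v n)" and bw: "square_summable (\<lambda>n. b n - w n)"
    using a b v(2) w(2) by (auto intro: l2_norm_diff_le(1))
  have "l2_norm (\<lambda>n. (\<alpha> * a n + \<beta> * b n) - (\<alpha> * v n + \<beta> * w n))
      = l2_norm (\<lambda>n. \<alpha> * (a n - v n) + \<beta> * (b n - w n))"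
    by (simp add: algebra_simps)
  also have "\<dots> \<le> cmod \<alpha> * l2_norm (\<lambda>n. a n - v n) + cmod \<beta> * l2_norm (\<lambda>n. b n - w n)"
    using l2_norm_triangle(2)[OF l2_norm_scale(1)[OF av] l2_norm_scale(1)[OF bw]]
    by (simp only: l2_norm_scale(2)[OF av] l2_norm_scale(2)[OF bw])
  also have "\<dots> \<le> cmod \<alpha> * e' + cmod \<beta> * e'"
    using v(3) w(3) by (intro add_mono mult_left_mono) auto
  also have "\<dots> = (cmod \<alpha> + cmod \<beta>) * e'"
    by (simp add: distrib_right)
  also have "\<dots> < e"
  proof -
    have "0 < 2 * (cmod \<alpha> + cmod \<beta> + 1)" by (simp add: add_nonneg_pos)
    thus ?thesis
      unfolding e'_def using e by (simp add: divide_less_eq mult.commute[of e] mult_strict_right_mono)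
  qed
  finally show "\<exists>u\<in>seq_span F I. square_summable u \<and>
      l2_norm (\<lambda>n. \<alpha> * a n + \<beta> * b n - u n) < e"
    using seq_span_lincomb[OF v(1) w(1)] v(2) w(2)
    by (intro bexI[of _ "\<lambda>n. \<alpha> * v n + \<beta> * w n"] conjI l2_norm_triangle(1) l2_norm_scale(1)) auto
qed

lemma closed_seq_span_approx:
  assumes "square_summable a" "\<And>e. e > 0 \<Longrightarrow> \<exists>b\<in>closed_seq_span F I. l2_norm (\<lambda>n. a n - b n) < e"
  shows "a \<in> closed_seq_span F I"
  unfolding closed_seq_span_def
proof (intro CollectI conjI allI impI)
  fix e :: real assume e: "e > 0"
  obtain b where b: "b \<in> closed_seq_span F I" "l2_norm (\<lambda>n. a n - b n) < e/2"
    using assms(2)[of "e/2"] e by auto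
  have "e/2 > 0" using e by simp
  then obtain v where v: "v \<in> seq_span F I" "square_summable v" "l2_norm (\<lambda>n. b n - v n) < e/2"
    using b(1) unfolding closed_seq_span_def by blast
  have "square_summable b" using b(1) by (rule closed_seq_span_imp_square_summable)
  hence "l2_norm (\<lambda>n. (a n - b n) + (b n - v n)) \<le> l2_norm (\<lambda>n. a n - b n) + l2_norm (\<lambda>n. b n - v n)"
    using assms(1) v(2) by (intro l2_norm_triangle l2_norm_diff_le)
  hence "l2_norm (\<lambda>n. a n - v n) < e" using b(2) v(3) by simp
  thus "\<exists>v\<in>seq_span F I. square_summable v \<and> l2_norm (\<lambda>n. a n - v n) < e"
    using v(1,2) by blast
qed (fact assms(1))

lemma seq_span_in_closed_seq_span:
  assumes "v \<in> seq_span F I" "square_summable v"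
  shows "v \<in> closed_seq_span F I"
proof -
  have "l2_norm (\<lambda>n. v n - v n) = 0" by (simp add: l2_norm_def)
  thus ?thesis using assms unfolding closed_seq_span_def by (intro CollectI conjI allI impI bexI[of _ v]) simp_all
qed

lemma closed_seq_span_generator:
  assumes "i \<in> I" "square_summable (F i)"
  shows "F i \<in> closed_seq_span F I"
proof (rule seq_span_in_closed_seq_span)
  show "F i \<in> seq_span F I"
    unfolding seq_span_def using assms(1)
    by (intro CollectI exI[of _ "{i}"] exI[of _ "\<lambda>_. 1"]) auto
qed (fact assms(2))

lemma zero_in_closed_seq_span: "(\<lambda>n. 0) \<in> closed_seq_span F I"
proof (rule seq_span_in_closed_seq_span)
  show "(\<lambda>n. 0) \<in> seq_span F I"
    unfolding seq_span_def by (intro CollectI exI[of _ "{}"]) auto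
qed (simp add: square_summable_def)

lemma closed_seq_span_sum:
  assumes "finite J" "\<And>j. j \<in> J \<Longrightarrow> f j \<in> closed_seq_span F I"
  shows "(\<lambda>n. \<Sum>j\<in>J. c j * f j n) \<in> closed_seq_span F I"
  using assms
proof (induction J rule: finite_induct)
  case empty
  thus ?case using zero_in_closed_seq_span by simp
next
  case (insert x J)
  hence "(\<lambda>n. c x * f x n + 1 * (\<Sum>j\<in>J. c j * f j n)) \<in> closed_seq_span F I"
    by (intro closed_seq_span_lincomb) auto
  thus ?case using insert by simp
qed

lemma closed_seq_span_scale:
  "a \<in> closed_seq_span F I \<Longrightarrow> (\<lambda>n. c * a n) \<in> closed_seq_span F I"
  using closed_seq_span_lincomb[of a F I a c 0] by simp

lemma closed_seq_span_add:
  "a \<in> closed_seq_span F I \<Longrightarrow> b \<in> closed_seq_span F I \<Longrightarrow> (\<lambda>n. a n + b n) \<in> closed_seq_span F I"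
  using closed_seq_span_lincomb[of a F I b 1 1] by simp

section \<open>The coefficient sequences of the functions \<open>(I - S) h\<^sub>k\<close>\<close>

definition harmonic_seq :: "nat \<Rightarrow> complex" where
  "harmonic_seq n = (if n = 0 then 0 else 1 / of_nat n)"

definition dilated_harmonic_seq :: "nat \<Rightarrow> nat \<Rightarrow> complex" where
  "dilated_harmonic_seq k n = (if n \<noteq> 0 \<and> k dvd n then of_nat k / of_nat n else 0)"

definition unit_seq :: "nat \<Rightarrow> nat \<Rightarrow> complex" where
  "unit_seq m n = (if n = m then 1 else 0)"

text \<open>The Taylor coefficients of \<open>Log(1 - z\<^sup>k) - Log(1 - z) - ln k\<close>.\<close>
definition h_coeffs :: "nat \<Rightarrow> nat \<Rightarrow> complex" where
  "h_coeffs k n = harmonic_seq n - dilated_harmonic_seq k n - (if n = 0 then of_real (ln (real k)) else 0)"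

abbreviation h_closure :: "(nat \<Rightarrow> complex) set" where
  "h_closure \<equiv> closed_seq_span h_coeffs {2..}"

lemma square_summable_harmonic_seq: "square_summable harmonic_seq"
proof -
  have "(\<lambda>n. (cmod (harmonic_seq n))^2) = (\<lambda>n. inverse (of_nat n ^ 2 :: real))"
    by (auto simp: harmonic_seq_def norm_divide power_divide field_simps)
  thus ?thesis
    unfolding square_summable_def using inverse_power_summable[of 2, where 'a=real] by simp
qed

lemma l2_norm_dilated_harmonic_seq:
  assumes "k \<ge> 1"
  shows "square_summable (dilated_harmonic_seq k)"
    and "l2_norm (dilated_harmonic_seq k) = l2_norm harmonic_seq"
proof -
  have "(\<lambda>m. (cmod (harmonic_seq m))^2) sums (\<Sum>n. (cmod (harmonic_seq n))^2)"
    using square_summable_harmonic_seq unfolding square_summable_def by (rule summable_sums)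
  moreover have "(\<lambda>m. (cmod (dilated_harmonic_seq k (k * m)))^2) = (\<lambda>m. (cmod (harmonic_seq m))^2)"
    using assms by (auto simp: dilated_harmonic_seq_def harmonic_seq_def norm_divide)
  ultimately have "(\<lambda>m. (cmod (dilated_harmonic_seq k (k * m)))^2) sums (\<Sum>n. (cmod (harmonic_seq n))^2)"
    by simp
  moreover have "strict_mono (\<lambda>m. k * m)"
    using assms by (auto simp: strict_mono_def)
  ultimately have "(\<lambda>n. (cmod (dilated_harmonic_seq k n))^2) sums (\<Sum>n. (cmod (harmonic_seq n))^2)"
    by (subst (asm) sums_mono_reindex) (auto simp: dilated_harmonic_seq_def)
  thus "square_summable (dilated_harmonic_seq k)"
    and "l2_norm (dilated_harmonic_seq k) = l2_norm harmonic_seq"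
    unfolding square_summable_def l2_norm_def by (auto simp: sums_iff)
qed

lemma l2_norm_unit_seq: "square_summable (unit_seq m)" "l2_norm (unit_seq m) = 1"
  using l2_norm_finite_support[of "{m}" "unit_seq m"] by (auto simp: unit_seq_def)

lemma square_summable_h_coeffs:
  assumes "k \<ge> 1"
  shows "square_summable (h_coeffs k)"
proof -
  have "square_summable (\<lambda>n. harmonic_seq n - dilated_harmonic_seq k n)"
    using square_summable_harmonic_seq l2_norm_dilated_harmonic_seq(1)[OF assms]
    by (rule l2_norm_diff_le(1))
  moreover have "square_summable (\<lambda>n. of_real (ln (real k)) * unit_seq 0 n)"
    using l2_norm_unit_seq(1) by (rule l2_norm_scale(1))
  ultimately have "square_summable
      (\<lambda>n. (harmonic_seq n - dilated_harmonic_seq k n) - of_real (ln (real k)) * unit_seq 0 n)"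
    by (rule l2_norm_diff_le(1))
  moreover have "(\<lambda>n. (harmonic_seq n - dilated_harmonic_seq k n) - of_real (ln (real k)) * unit_seq 0 n)
      = h_coeffs k"
    by (auto simp: h_coeffs_def unit_seq_def)
  ultimately show ?thesis by simp
qed

lemma h_coeffs_in_h_closure: "k \<ge> 2 \<Longrightarrow> h_coeffs k \<in> h_closure"
  by (intro closed_seq_span_generator square_summable_h_coeffs) auto

text \<open>Since \<open>\<parallel>harmonic_seq - dilated_harmonic_seq k\<parallel> \<le> 2 \<parallel>harmonic_seq\<parallel>\<close>,
  \<open>-h_coeffs k / ln k\<close> tends to \<open>unit_seq 0\<close> as \<open>k \<rightarrow> \<infinity>\<close>.\<close>
lemma unit_seq_0_in_h_closure: "unit_seq 0 \<in> h_closure"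
proof (rule closed_seq_span_approx)
  show "square_summable (unit_seq 0)" by (rule l2_norm_unit_seq(1))
  fix e :: real assume e: "e > 0"
  define X where "X = 2 * l2_norm harmonic_seq / e"
  define k where "k = nat \<lceil>exp X\<rceil> + 2"
  have k2: "k \<ge> 2" unfolding k_def by simp
  have "real k > exp X" unfolding k_def by linarith
  hence "ln (exp X) < ln (real k)" using k2 by (intro ln_less_cancel_iff[THEN iffD2]) auto
  hence lnk: "ln (real k) > X" by simp
  have "X \<ge> 0" unfolding X_def using e l2_norm_nonneg[OF square_summable_harmonic_seq] by simp
  with lnk have lnk_pos: "ln (real k) > 0" by linarith
  have diff_summable: "square_summable (\<lambda>n. harmonic_seq n - dilated_harmonic_seq k n)"
    and diff_bound: "l2_norm (\<lambda>n. harmonic_seq n - dilated_harmonic_seq k n) \<le> 2 * l2_norm harmonic_seq"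
    using l2_norm_diff_le[OF square_summable_harmonic_seq l2_norm_dilated_harmonic_seq(1), of k]
      l2_norm_dilated_harmonic_seq(2)[of k] k2 by auto
  define b where "b = (\<lambda>n. complex_of_real (- 1 / ln (real k)) * h_coeffs k n)"
  have "b \<in> h_closure"
    unfolding b_def using h_coeffs_in_h_closure[OF k2] by (rule closed_seq_span_scale)
  have "(\<lambda>n. unit_seq 0 n - b n)
      = (\<lambda>n. complex_of_real (1 / ln (real k)) * (harmonic_seq n - dilated_harmonic_seq k n))"
    using lnk_pos by (auto simp: b_def h_coeffs_def unit_seq_def field_simps)
  hence "l2_norm (\<lambda>n. unit_seq 0 n - b n)
      = cmod (complex_of_real (1 / ln (real k))) * l2_norm (\<lambda>n. harmonic_seq n - dilated_harmonic_seq k n)"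
    by (simp only: l2_norm_scale(2)[OF diff_summable])
  also have "\<dots> = 1 / ln (real k) * l2_norm (\<lambda>n. harmonic_seq n - dilated_harmonic_seq k n)"
    using lnk_pos by (simp only: norm_of_real) simp
  also have "\<dots> \<le> 1 / ln (real k) * (2 * l2_norm harmonic_seq)"
    using diff_bound lnk_pos by (intro mult_left_mono) auto
  also have "\<dots> < e"
  proof -
    have "2 * l2_norm harmonic_seq = X * e" unfolding X_def using e by simp
    also have "\<dots> < ln (real k) * e" using lnk e by simp
    finally show ?thesis using lnk_pos by (simp add: field_simps)
  qed
  finally show "\<exists>b\<in>h_closure. l2_norm (\<lambda>n. unit_seq 0 n - b n) < e"
    using \<open>b \<in> h_closure\<close> by blast
qed

lemma harmonic_diff_dilated_in_h_closure:
  assumes "k \<ge> 1"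
  shows "(\<lambda>n. harmonic_seq n - dilated_harmonic_seq k n) \<in> h_closure"
proof (cases "k = 1")
  case True
  hence "(\<lambda>n. harmonic_seq n - dilated_harmonic_seq k n) = (\<lambda>n. 0)"
    by (auto simp: dilated_harmonic_seq_def harmonic_seq_def)
  thus ?thesis using zero_in_closed_seq_span by simp
next
  case False
  hence "(\<lambda>n. h_coeffs k n + complex_of_real (ln (real k)) * unit_seq 0 n) \<in> h_closure"
    using assms h_coeffs_in_h_closure closed_seq_span_scale[OF unit_seq_0_in_h_closure]
    by (intro closed_seq_span_add) auto
  moreover have "(\<lambda>n. h_coeffs k n + complex_of_real (ln (real k)) * unit_seq 0 n)
      = (\<lambda>n. harmonic_seq n - dilated_harmonic_seq k n)"
    by (auto simp: h_coeffs_def unit_seq_def)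
  ultimately show ?thesis by simp
qed

section \<open>The sieve of Eratosthenes on the dilated harmonic sequences\<close>

definition rough :: "nat \<Rightarrow> nat \<Rightarrow> bool" where
  "rough P j \<longleftrightarrow> (\<forall>d. 2 \<le> d \<and> d \<le> P \<longrightarrow> \<not> d dvd j)"

lemma rough_Suc: "rough (Suc P) j \<longleftrightarrow> rough P j \<and> \<not> (2 \<le> Suc P \<and> Suc P dvd j)"
  unfolding rough_def by (auto simp: le_Suc_eq)

lemma rough_1: "rough P 1"
  unfolding rough_def by auto

lemma rough_gt:
  assumes "rough P j" "j \<ge> 2"
  shows "j > P"
  using assms(1)[unfolded rough_def, rule_format, of j] assms(2) by fastforce

lemma prime_Suc_iff_rough: "prime (Suc P) \<longleftrightarrow> 2 \<le> Suc P \<and> rough P (Suc P)"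
proof
  assume p: "prime (Suc P)"
  have "d = 1 \<or> d = Suc P" if "d dvd Suc P" for d
    using p that unfolding prime_nat_iff by blast
  hence "rough P (Suc P)" unfolding rough_def by fastforce
  moreover have "2 \<le> Suc P" using prime_ge_2_nat[OF p] .
  ultimately show "2 \<le> Suc P \<and> rough P (Suc P)" by blast
next
  assume *: "2 \<le> Suc P \<and> rough P (Suc P)"
  have "d = 1 \<or> d = Suc P" if d: "d dvd Suc P" for d
  proof (rule ccontr)
    assume "\<not> (d = 1 \<or> d = Suc P)"
    moreover have "0 < d" "d \<le> Suc P" using d dvd_pos_nat dvd_imp_le zero_less_Suc by blast+
    ultimately have "2 \<le> d \<and> d \<le> P" by linarith
    thus False using * d unfolding rough_def by blast
  qed
  thus "prime (Suc P)" using * unfolding prime_nat_iff by auto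
qed

lemma rough_prime_mult_iff:
  assumes "prime (Suc P)"
  shows "rough P (Suc P * i) \<longleftrightarrow> rough P i"
proof
  assume "rough P (Suc P * i)" thus "rough P i" unfolding rough_def by auto
next
  assume i: "rough P i"
  show "rough P (Suc P * i)" unfolding rough_def
  proof (intro allI impI notI)
    fix d assume d: "2 \<le> d \<and> d \<le> P" "d dvd Suc P * i"
    have "\<not> Suc P dvd d" using d(1) by (auto dest: dvd_imp_le)
    hence "coprime d (Suc P)" using prime_imp_coprime[OF assms] by (simp add: coprime_commute)
    hence "d dvd i" using d(2) coprime_dvd_mult_right_iff by blast
    thus False using i d(1) unfolding rough_def by blast
  qed
qed

text \<open>The coefficients of \<open>\<Sum> z\<^sup>m\<^sup>j / j\<close> over the \<open>j\<close> without divisors in \<open>[2, P]\<close>.\<close>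
definition sieved_harmonic :: "nat \<Rightarrow> nat \<Rightarrow> nat \<Rightarrow> complex" where
  "sieved_harmonic P m n =
     (if n \<noteq> 0 \<and> m dvd n \<and> rough P (n div m) then of_nat m / of_nat n else 0)"

primrec sieve_density :: "nat \<Rightarrow> real" where
  "sieve_density 0 = 1"
| "sieve_density (Suc P) =
     (if prime (Suc P) then sieve_density P * (1 - 1 / real (Suc P)) else sieve_density P)"

lemma sieved_harmonic_0: "sieved_harmonic 0 m = dilated_harmonic_seq m"
  by (auto simp: sieved_harmonic_def dilated_harmonic_seq_def rough_def fun_eq_iff)

lemma sieved_harmonic_Suc_nonprime:
  assumes "\<not> prime (Suc P)"
  shows "sieved_harmonic (Suc P) m = sieved_harmonic P m"
proof -
  have "rough (Suc P) j \<longleftrightarrow> rough P j" for j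
  proof (cases "2 \<le> Suc P")
    case True
    then obtain d where "2 \<le> d" "d \<le> P" "d dvd Suc P"
      using assms unfolding prime_Suc_iff_rough rough_def by auto
    thus ?thesis unfolding rough_Suc unfolding rough_def by (meson dvd_trans)
  qed (simp add: rough_Suc)
  thus ?thesis unfolding sieved_harmonic_def by simp
qed

lemma sieved_harmonic_Suc_prime:
  assumes "prime (Suc P)" and m: "m \<ge> 1"
  shows "sieved_harmonic (Suc P) m n
    = sieved_harmonic P m n - 1 / of_nat (Suc P) * sieved_harmonic P (m * Suc P) n"
proof -
  define p where "p = Suc P"
  have p: "prime p" "p \<ge> 2" using assms(1) prime_Suc_iff_rough unfolding p_def by blast+
  have "sieved_harmonic p m n = sieved_harmonic P m n - 1 / of_nat p * sieved_harmonic P (m * p) n"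
  proof (cases "n \<noteq> 0 \<and> m dvd n")
    case False
    hence "\<not> (n \<noteq> 0 \<and> m * p dvd n)" by (auto intro: dvd_mult_left)
    thus ?thesis using False unfolding sieved_harmonic_def by auto
  next
    case True
    then obtain j where j: "n = m * j" "j \<noteq> 0" by (auto elim: dvdE)
    have n_div_m: "n div m = j" using j m by simp
    have dvd_iff: "m * p dvd n \<longleftrightarrow> p dvd j" using j m by simp
    show ?thesis
    proof (cases "p dvd j")
      case False
      hence "\<not> m * p dvd n" using dvd_iff by simp
      moreover have "rough p j \<longleftrightarrow> rough P j" using False rough_Suc unfolding p_def by simp
      ultimately show ?thesis using True unfolding sieved_harmonic_def n_div_m by simp
    next
      case p_dvd: True
      then obtain i where i: "j = p * i" by (auto elim: dvdE)
      have "m * p dvd n" "n div (m * p) = i" using dvd_iff p_dvd i j m by (auto simp: mult.assoc)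
      moreover have "\<not> rough p j" using p_dvd p(2) rough_Suc unfolding p_def by simp
      moreover have "rough P j \<longleftrightarrow> rough P i"
        unfolding i p_def using rough_prime_mult_iff[OF assms(1)] .
      moreover have "1 / of_nat p * (of_nat (m * p) / of_nat n) = (of_nat m / of_nat n :: complex)"
        using p(2) by (simp add: field_simps)
      ultimately show ?thesis using True unfolding sieved_harmonic_def n_div_m by auto
    qed
  qed
  thus ?thesis unfolding p_def .
qed

lemma sieve_density_nonneg: "sieve_density P \<ge> 0"
  by (induction P) auto

lemma decseq_sieve_density: "decseq sieve_density"
proof (rule decseq_SucI)
  fix P
  have "sieve_density P * (1 - 1 / real (Suc P)) \<le> sieve_density P * 1"
    using sieve_density_nonneg[of P] by (intro mult_left_mono) auto
  thus "sieve_density (Suc P) \<le> sieve_density P" by auto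
qed

lemma sieved_harmonic_minus_density_in_h_closure:
  assumes "m \<ge> 1"
  shows "(\<lambda>n. sieved_harmonic P m n - of_real (sieve_density P) * harmonic_seq n) \<in> h_closure"
  using assms
proof (induction P arbitrary: m)
  case 0
  have "(\<lambda>n. (-1) * (harmonic_seq n - dilated_harmonic_seq m n)) \<in> h_closure"
    using harmonic_diff_dilated_in_h_closure[OF 0] by (rule closed_seq_span_scale)
  thus ?case by (simp add: sieved_harmonic_0)
next
  case (Suc P)
  show ?case
  proof (cases "prime (Suc P)")
    case False
    thus ?thesis using Suc by (simp add: sieved_harmonic_Suc_nonprime)
  next
    case True
    have "m * Suc P \<ge> 1" using Suc.prems by simp
    hence "(\<lambda>n. 1 * (sieved_harmonic P m n - of_real (sieve_density P) * harmonic_seq n)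
        + (- 1 / of_nat (Suc P)) * (sieved_harmonic P (m * Suc P) n
                                   - of_real (sieve_density P) * harmonic_seq n)) \<in> h_closure"
      by (intro closed_seq_span_lincomb Suc.IH Suc.prems)
    thus ?thesis
      using True by (simp add: sieved_harmonic_Suc_prime[OF True Suc.prems] algebra_simps)
  qed
qed

lemma sieved_harmonic_le: "cmod (sieved_harmonic P m n) \<le> cmod (of_nat m * harmonic_seq n)"
  by (auto simp: sieved_harmonic_def harmonic_seq_def norm_divide norm_mult)

text \<open>For \<open>n \<noteq> m\<close> the sequence \<open>sieved_harmonic P m\<close> is supported on \<open>n = m j\<close> with
  \<open>j > P\<close>, where it is \<open>m/n\<close>.\<close>
lemma unit_seq_minus_sieved_harmonic_le:
  assumes m: "m \<ge> 1"
  shows "cmod (unit_seq m n - sieved_harmonic P m n) \<le> cmod (of_nat m * tail_seq harmonic_seq P n)"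
proof (cases "n \<noteq> 0 \<and> m dvd n \<and> rough P (n div m)")
  case True
  then obtain j where j: "n = m * j" "j \<noteq> 0" by (auto elim: dvdE)
  have n_div_m: "n div m = j" using j m by simp
  show ?thesis
  proof (cases "j = 1")
    case True
    thus ?thesis using j m by (simp add: sieved_harmonic_def unit_seq_def rough_def)
  next
    case False
    hence "j > P" using rough_gt[of P j] True j(2) n_div_m by simp
    moreover have "j \<le> n" using j m by simp
    moreover have "n \<noteq> m" using j False m by simp
    ultimately show ?thesis
      using True by (simp add: sieved_harmonic_def unit_seq_def tail_seq_def harmonic_seq_def norm_divide)
  qed
next
  case False
  hence "n \<noteq> m" and "sieved_harmonic P m n = 0"
    using m rough_1[of P] unfolding sieved_harmonic_def by auto
  thus ?thesis by (simp add: unit_seq_def)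
qed

lemma unit_seq_minus_harmonic_in_h_closure:
  assumes L: "sieve_density \<longlonglongrightarrow> L" and m: "m \<ge> 1"
  shows "(\<lambda>n. unit_seq m n - of_real L * harmonic_seq n) \<in> h_closure"
proof (rule closed_seq_span_approx)
  note harmonic = square_summable_harmonic_seq
  show "square_summable (\<lambda>n. unit_seq m n - of_real L * harmonic_seq n)"
    using l2_norm_unit_seq(1) l2_norm_scale(1)[OF harmonic] by (rule l2_norm_diff_le(1))
  fix e :: real assume e: "e > 0"
  have "(\<lambda>P. real m * l2_norm (tail_seq harmonic_seq P) + \<bar>sieve_density P - L\<bar> * l2_norm harmonic_seq)
      \<longlonglongrightarrow> real m * 0 + \<bar>L - L\<bar> * l2_norm harmonic_seq"
    by (intro tendsto_intros l2_norm_tail_seq_tendsto_0 harmonic L)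
  hence "eventually (\<lambda>P. real m * l2_norm (tail_seq harmonic_seq P)
      + \<bar>sieve_density P - L\<bar> * l2_norm harmonic_seq < e) sequentially"
    using e by (intro order_tendstoD(2)) auto
  then obtain P where P: "real m * l2_norm (tail_seq harmonic_seq P)
      + \<bar>sieve_density P - L\<bar> * l2_norm harmonic_seq < e"
    by (auto simp: eventually_sequentially)
  have tail: "square_summable (tail_seq harmonic_seq P)"
    using harmonic by (rule square_summable_tail_seq)
  have sieved: "square_summable (sieved_harmonic P m)"
    using l2_norm_scale(1)[OF harmonic] sieved_harmonic_le by (rule l2_norm_mono(1))
  have unit_diff: "square_summable (\<lambda>n. unit_seq m n - sieved_harmonic P m n)"
    using l2_norm_unit_seq(1) sieved by (rule l2_norm_diff_le(1))
  have density_diff: "square_summable (\<lambda>n. of_real (sieve_density P - L) * harmonic_seq n)"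
    using harmonic by (rule l2_norm_scale(1))
  have "l2_norm (\<lambda>n. unit_seq m n - sieved_harmonic P m n)
      \<le> l2_norm (\<lambda>n. of_nat m * tail_seq harmonic_seq P n)"
    using l2_norm_scale(1)[OF tail] unit_seq_minus_sieved_harmonic_le[OF m]
    by (rule l2_norm_mono(2))
  also have "\<dots> = real m * l2_norm (tail_seq harmonic_seq P)"
    using l2_norm_scale(2)[OF tail, of "of_nat m"] by simp
  finally have unit_bound: "l2_norm (\<lambda>n. unit_seq m n - sieved_harmonic P m n)
      \<le> real m * l2_norm (tail_seq harmonic_seq P)" .
  have density_bound: "l2_norm (\<lambda>n. of_real (sieve_density P - L) * harmonic_seq n)
      = \<bar>sieve_density P - L\<bar> * l2_norm harmonic_seq"
    using l2_norm_scale(2)[OF harmonic, of "of_real (sieve_density P - L)"] by (simp only: norm_of_real)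
  have "(\<lambda>n. (unit_seq m n - of_real L * harmonic_seq n)
        - (sieved_harmonic P m n - of_real (sieve_density P) * harmonic_seq n))
      = (\<lambda>n. (unit_seq m n - sieved_harmonic P m n) + of_real (sieve_density P - L) * harmonic_seq n)"
    by (auto simp: algebra_simps)
  hence "l2_norm (\<lambda>n. (unit_seq m n - of_real L * harmonic_seq n)
        - (sieved_harmonic P m n - of_real (sieve_density P) * harmonic_seq n))
      \<le> l2_norm (\<lambda>n. unit_seq m n - sieved_harmonic P m n)
        + l2_norm (\<lambda>n. of_real (sieve_density P - L) * harmonic_seq n)"
    using l2_norm_triangle(2)[OF unit_diff density_diff] by simp
  also have "\<dots> < e" using unit_bound density_bound P by linarith
  finally show "\<exists>b\<in>h_closure. l2_norm (\<lambda>n. unit_seq m n - of_real L * harmonic_seq n - b n) < e"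
    using sieved_harmonic_minus_density_in_h_closure[OF m, of P]
    by (intro bexI[of _ "\<lambda>n. sieved_harmonic P m n - of_real (sieve_density P) * harmonic_seq n"]) auto
qed

text \<open>Averaging \<open>unit_seq j - c\<close> over \<open>1 \<le> j \<le> M\<close> gives \<open>-c\<close> up to an error of norm \<open>1/\<surd>M\<close>.\<close>
lemma closed_seq_span_uminus_if_unit_seq_diff:
  assumes c: "square_summable c"
    and unit_diff: "\<And>j. j \<ge> 1 \<Longrightarrow> (\<lambda>n. unit_seq j n - c n) \<in> closed_seq_span F I"
  shows "(\<lambda>n. - c n) \<in> closed_seq_span F I"
proof (rule closed_seq_span_approx)
  show "square_summable (\<lambda>n. - c n)" using l2_norm_scale(1)[OF c, of "-1"] by simp
  fix e :: real assume e: "e > 0"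
  define M where "M = nat \<lceil>1 / e^2\<rceil> + 1"
  have M: "M \<ge> 1" "real M > 1 / e^2" unfolding M_def by linarith+
  define b where "b = (\<lambda>n. \<Sum>j\<in>{1..M}. (1 / of_nat M) * (unit_seq j n - c n))"
  have "b \<in> closed_seq_span F I" unfolding b_def by (intro closed_seq_span_sum unit_diff) auto
  have b_eq: "b n = (if n \<in> {1..M} then 1 / of_nat M else 0) - c n" for n
  proof -
    have "b n = (1 / of_nat M) * (\<Sum>j\<in>{1..M}. unit_seq j n) - of_nat M * (1 / of_nat M) * c n"
      unfolding b_def by (simp add: sum_subtractf right_diff_distrib sum_distrib_left)
    also have "(\<Sum>j\<in>{1..M}. unit_seq j n) = (if n \<in> {1..M} then 1 else 0)"
      unfolding unit_seq_def by (rule sum.delta'[OF finite_atLeastAtMost])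
    finally show ?thesis using M(1) by simp
  qed
  have "l2_norm (\<lambda>n. - c n - b n) = sqrt (\<Sum>n\<in>{1..M}. (cmod (- c n - b n))^2)"
    by (rule l2_norm_finite_support(2)) (auto simp: b_eq)
  also have "(\<Sum>n\<in>{1..M}. (cmod (- c n - b n))^2) = 1 / real M"
    using M(1) by (simp add: b_eq norm_divide power2_eq_square)
  also have "sqrt (1 / real M) < sqrt (e^2)"
    using M e by (intro real_sqrt_less_mono) (simp add: field_simps)
  finally show "\<exists>b\<in>closed_seq_span F I. l2_norm (\<lambda>n. - c n - b n) < e"
    using \<open>b \<in> closed_seq_span F I\<close> e by auto
qed

lemma unit_seq_in_h_closure: "unit_seq m \<in> h_closure"
proof -
  obtain L where L: "sieve_density \<longlonglongrightarrow> L"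
    using decseq_convergent[OF decseq_sieve_density, of 0] sieve_density_nonneg by blast
  consider "m = 0" | "m \<ge> 1" "L = 0" | "m \<ge> 1" "L \<noteq> 0" by linarith
  thus ?thesis
  proof cases
    case 1
    thus ?thesis using unit_seq_0_in_h_closure by simp
  next
    case 2
    thus ?thesis using unit_seq_minus_harmonic_in_h_closure[OF L] by simp
  next
    case 3
    have "(\<lambda>n. - (of_real L * harmonic_seq n)) \<in> h_closure"
      using l2_norm_scale(1)[OF square_summable_harmonic_seq] unit_seq_minus_harmonic_in_h_closure[OF L]
      by (rule closed_seq_span_uminus_if_unit_seq_diff)
    hence "(\<lambda>n. (- 1 / of_real L) * (- (of_real L * harmonic_seq n))) \<in> h_closure"
      by (rule closed_seq_span_scale)
    hence "harmonic_seq \<in> h_closure" using 3 by simp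
    hence "(\<lambda>n. 1 * (unit_seq m n - of_real L * harmonic_seq n) + of_real L * harmonic_seq n) \<in> h_closure"
      using unit_seq_minus_harmonic_in_h_closure[OF L 3(1)] by (intro closed_seq_span_lincomb)
    thus ?thesis by simp
  qed
qed

lemma square_summable_in_h_closure:
  assumes a: "square_summable a"
  shows "a \<in> h_closure"
proof (rule closed_seq_span_approx[OF a])
  fix e :: real assume e: "e > 0"
  have "eventually (\<lambda>M. l2_norm (tail_seq a M) < e) sequentially"
    using l2_norm_tail_seq_tendsto_0[OF a] e by (intro order_tendstoD(2)) auto
  then obtain M where M: "l2_norm (tail_seq a M) < e" by (auto simp: eventually_sequentially)
  define b where "b = (\<lambda>n. \<Sum>j<M. a j * unit_seq j n)"
  have "b \<in> h_closure" unfolding b_def by (intro closed_seq_span_sum unit_seq_in_h_closure) auto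
  moreover have "(\<lambda>n. a n - b n) = tail_seq a M"
    by (auto simp: b_def unit_seq_def tail_seq_def if_distrib[of "\<lambda>x. a _ * x"] cong: if_cong)
  ultimately show "\<exists>b\<in>h_closure. l2_norm (\<lambda>n. a n - b n) < e"
    using M by (intro bexI[of _ b]) simp_all
qed

section \<open>From coefficient sequences to \<open>H\<^sup>2\<close>\<close>

definition I_minus_S_h :: "nat \<Rightarrow> complex \<Rightarrow> complex" where
  "I_minus_S_h k = (\<lambda>z. h k z - shift (h k) z)"

lemma harmonic_seq_sums:
  assumes "norm u < 1"
  shows "(\<lambda>n. harmonic_seq n * u^n) sums (- Ln (1 - u))"
proof -
  have "(\<lambda>n. - ((-(-u))^n) / of_nat n) sums ln (1 + (-u))"
    using assms by (intro Ln_series') simp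
  hence "(\<lambda>n. - (- (u^n) / of_nat n)) sums (- ln (1 - u))"
    using sums_minus by fastforce
  moreover have "(\<lambda>n. - (- (u^n) / of_nat n)) = (\<lambda>n. harmonic_seq n * u^n)"
    by (auto simp: harmonic_seq_def)
  ultimately show ?thesis by simp
qed

lemma dilated_harmonic_seq_sums:
  assumes "norm u < 1" "k \<ge> 1"
  shows "(\<lambda>n. dilated_harmonic_seq k n * u^n) sums (- Ln (1 - u^k))"
proof -
  have "norm (u^k) < 1" using assms by (simp add: norm_power power_less_one_iff)
  hence "(\<lambda>m. harmonic_seq m * (u^k)^m) sums (- Ln (1 - u^k))"
    by (rule harmonic_seq_sums)
  moreover have "(\<lambda>m. dilated_harmonic_seq k (k * m) * u^(k * m)) = (\<lambda>m. harmonic_seq m * (u^k)^m)"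
    using assms by (auto simp: dilated_harmonic_seq_def harmonic_seq_def power_mult)
  ultimately have "(\<lambda>m. dilated_harmonic_seq k (k * m) * u^(k * m)) sums (- Ln (1 - u^k))"
    by simp
  moreover have "strict_mono (\<lambda>m. k * m)" using assms by (auto simp: strict_mono_def)
  ultimately show ?thesis
    by (subst (asm) sums_mono_reindex) (auto simp: dilated_harmonic_seq_def)
qed

lemma I_minus_S_h_eq:
  assumes "norm u < 1"
  shows "I_minus_S_h k u = Ln (1 - u^k) - Ln (1 - u) - of_real (ln (real k))"
proof -
  define X where "X = Ln (1 - u^k) - Ln (1 - u) - of_real (ln (real k))"
  have "1 - u \<noteq> 0" using assms by auto
  have "I_minus_S_h k u = X / (1 - u) - u * (X / (1 - u))"
    unfolding I_minus_S_h_def h_def shift_def X_def by simp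
  also have "\<dots> = (1 - u) * (X / (1 - u))"
    by (simp only: left_diff_distrib mult_1_left)
  also have "\<dots> = X" using \<open>1 - u \<noteq> 0\<close> by simp
  finally show ?thesis unfolding X_def .
qed

lemma I_minus_S_h_has_fps_expansion:
  assumes "k \<ge> 1"
  shows "I_minus_S_h k has_fps_expansion Abs_fps (h_coeffs k)"
proof (rule has_fps_expansionI)
  have "eventually (\<lambda>u. u \<in> ball 0 1) (nhds (0::complex))"
    by (intro eventually_nhds_in_open) auto
  thus "eventually (\<lambda>u. (\<lambda>n. fps_nth (Abs_fps (h_coeffs k)) n * u ^ n) sums I_minus_S_h k u) (nhds 0)"
  proof (rule eventually_mono)
    fix u :: complex assume "u \<in> ball 0 1"
    hence u: "norm u < 1" by simp
    have "(\<lambda>n. if n = 0 then of_real (ln (real k)) else 0) sums (of_real (ln (real k)) :: complex)"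
      using sums_single[of 0 "\<lambda>_. of_real (ln (real k)) :: complex"] by simp
    also have "(\<lambda>n. if n = 0 then of_real (ln (real k)) else 0)
        = (\<lambda>n. (if n = 0 then of_real (ln (real k)) else 0) * u^n)"
      by auto
    finally have "(\<lambda>n. harmonic_seq n * u^n - dilated_harmonic_seq k n * u^n
          - (if n = 0 then of_real (ln (real k)) else 0) * u^n)
        sums (- Ln (1 - u) - (- Ln (1 - u^k)) - of_real (ln (real k)))"
      by (intro sums_diff harmonic_seq_sums dilated_harmonic_seq_sums u assms)
    moreover have "(\<lambda>n. harmonic_seq n * u^n - dilated_harmonic_seq k n * u^n
          - (if n = 0 then of_real (ln (real k)) else 0) * u^n)
        = (\<lambda>n. fps_nth (Abs_fps (h_coeffs k)) n * u ^ n)"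
      by (simp add: h_coeffs_def fun_eq_iff left_diff_distrib)
    moreover have "- Ln (1 - u) - (- Ln (1 - u^k)) - of_real (ln (real k)) = I_minus_S_h k u"
      using I_minus_S_h_eq[OF u] by simp
    ultimately show "(\<lambda>n. fps_nth (Abs_fps (h_coeffs k)) n * u ^ n) sums I_minus_S_h k u" by simp
  qed
qed

lemma lin_span_sum:
  assumes "finite K" "f ` K \<subseteq> F"
  shows "(\<lambda>z. \<Sum>k\<in>K. c k * f k z) \<in> lin_span F"
proof -
  define c' where "c' u = (\<Sum>k\<in>{x\<in>K. f x = u}. c k)" for u
  have "(\<Sum>u\<in>f ` K. c' u * u z) = (\<Sum>k\<in>K. c k * f k z)" for z
  proof -
    have "(\<Sum>u\<in>f ` K. c' u * u z) = (\<Sum>u\<in>f ` K. \<Sum>k\<in>{x\<in>K. f x = u}. c k * f k z)"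
      unfolding c'_def sum_distrib_right by (intro sum.cong refl) auto
    also have "\<dots> = (\<Sum>k\<in>K. c k * f k z)"
      using assms(1) by (rule sum.image_gen[symmetric])
    finally show ?thesis .
  qed
  thus ?thesis unfolding lin_span_def using assms by (intro CollectI exI[of _ "f ` K"] exI[of _ c']) auto
qed

lemma taylor_coeff_diff_lincomb_I_minus_S_h:
  assumes "f holomorphic_on ball 0 1" "finite K" "K \<subseteq> {1..}"
  shows "taylor_coeff (\<lambda>z. f z - (\<Sum>k\<in>K. c k * I_minus_S_h k z)) n
    = taylor_coeff f n - (\<Sum>k\<in>K. c k * h_coeffs k n)"
proof -
  have f: "f has_fps_expansion fps_expansion f 0"
    using assms(1) by (intro has_fps_expansion_fps_expansion) auto
  have "(\<lambda>z. \<Sum>k\<in>K. c k * I_minus_S_h k z) has_fps_expansion (\<Sum>k\<in>K. fps_const (c k) * Abs_fps (h_coeffs k))"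
    using assms(3) by (intro has_fps_expansion_sum has_fps_expansion_cmult_left I_minus_S_h_has_fps_expansion) auto
  with f have "(\<lambda>z. f z - (\<Sum>k\<in>K. c k * I_minus_S_h k z))
      has_fps_expansion (fps_expansion f 0 - (\<Sum>k\<in>K. fps_const (c k) * Abs_fps (h_coeffs k)))"
    by (rule has_fps_expansion_diff)
  from fps_nth_fps_expansion[OF this, of n] fps_nth_fps_expansion[OF f, of n] show ?thesis
    unfolding taylor_coeff_def by (simp add: fps_sum_nth)
qed

theorem mainTheorem9:
  shows "\<forall>f\<in>hardy2. \<forall>e>0. \<exists>g\<in>lin_span {(\<lambda>z. h k z - shift (h k) z) | k. k \<ge> 2}.
           hardy2_norm (\<lambda>z. f z - g z) < e"
proof (intro ballI allI impI)
  fix f :: "complex \<Rightarrow> complex" and e :: real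
  assume f: "f \<in> hardy2" and e: "e > 0"
  have "taylor_coeff f \<in> h_closure"
    using f unfolding hardy2_def by (intro square_summable_in_h_closure) (simp add: square_summable_def)
  then obtain v where v: "v \<in> seq_span h_coeffs {2..}" "l2_norm (\<lambda>n. taylor_coeff f n - v n) < e"
    using e unfolding closed_seq_span_def by blast
  then obtain K c where K: "finite K" "K \<subseteq> {2..}" "v = (\<lambda>n. \<Sum>k\<in>K. c k * h_coeffs k n)"
    unfolding seq_span_def by blast
  define g where "g = (\<lambda>z. \<Sum>k\<in>K. c k * I_minus_S_h k z)"
  have "g \<in> lin_span {(\<lambda>z. h k z - shift (h k) z) | k. k \<ge> 2}"
    unfolding g_def using K(1,2) by (intro lin_span_sum) (auto simp: I_minus_S_h_def)
  moreover have "taylor_coeff (\<lambda>z. f z - g z) n = taylor_coeff f n - v n" for n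
    unfolding g_def K(3) using f K(1,2) unfolding hardy2_def
    by (intro taylor_coeff_diff_lincomb_I_minus_S_h) auto
  hence "hardy2_norm (\<lambda>z. f z - g z) = l2_norm (\<lambda>n. taylor_coeff f n - v n)"
    unfolding hardy2_norm_def l2_norm_def by simp
  ultimately show "\<exists>g\<in>lin_span {(\<lambda>z. h k z - shift (h k) z) | k. k \<ge> 2}.
      hardy2_norm (\<lambda>z. f z - g z) < e"
    using v(2) by (intro bexI[of _ g]) simp_all
qed

end
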